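(* Assume $\ell=2$. Consider joint laws of $(Y^{(0)},Y^{(1)},D,Z)$ satisfying (Exclusion) $Y^{(d,0)}=Y^{(d,1)}$ a.s. (written $Y^{(d)}$), (Joint independence) $Z\perp(Y^{(0)},Y^{(1)})$, and (Outcome consistency) $Y=(1-D)Y^{(0)}+DY^{(1)}$. Then for every such law with observed law $\mathcal P$ of $(Y,D,Z)$, $$\max_{\mathbf v\in\mathcal V}\mathbf v^\top\mathbf p\le \mathbb E[Y^{(1)}-Y^{(0)}]\le-\max_{\mathbf v\in\mathcal V}\mathbf v^\top\bar{\mathbf p},$$ and the bounds are sharp: for every observed law $\mathcal P$ arising from such a law, there exist such laws inducing $\mathcal P$ attaining the lower bound and the upper bound respectively.
   Context: $D\in\{0,1\}$ treatment; $Y$ outcome with values $\gamma_0<\dots<\gamma_{n-1}$; instrument $Z\in\{0,1\}$ with $\mathcal P(Z=z)>0$; $[n]=\{0,\dots,n-1\}$; $Y^{(d,z)}$ potential outcomes. Vectors $\mathbf p,\bar{\mathbf p}\in\mathbb R^{4n}$: $p_{ydz}=\mathcal P(Y=\gamma_y,D=d\mid Z=z)$, $\bar p_{ydz}=p_{y(1-d)z}$, and $\mathbf v^\top\mathbf p=\sum_{y,d,z}v_{ydz}p_{ydz}$. $\mathcal V=\{\mathbf u(\mathbf B):\mathbf B\in S\}$, where $S=S_1\cup S_2\cup S_3\subseteq\{0,1\}^{n\times2\times2}$: $\mathbf B\in S_1$ iff some $t\in\{0,\dots,n-2\}$ has $B_{i00}=B_{i01}=1$ for $i\ge t$ and $B_{i00}\ne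 B_{i01}$ for $i<t$, $B_{i10}\ne B_{i11}$ for all $i$, and some $i,j$ have $B_{i10}=B_{j11}=1$; $\mathbf B\in S_2$ iff $B_{(n-1)00}=B_{(n-1)01}=B_{010}=B_{011}=1$, $B_{i00}\ne B_{i01}$ for $i<n-1$, $B_{j10}\ne B_{j11}$ for $j>0$; $\mathbf B\in S_3$ iff some $t\in\{1,\dots,n-1\}$ has $B_{i10}=B_{i11}=1$ for $i\le t$ and $B_{i10}\ne B_{i11}$ for $i>t$, $B_{i00}\ne B_{i01}$ for all $i$, and some $i,j$ have $B_{i00}=B_{j01}=1$. With $\alpha=-\gamma_0-\gamma_t$ on $S_1$, $-\gamma_0-\gamma_{n-1}$ on $S_2$, $-\gamma_t-\gamma_{n-1}$ on $S_3$: $u_{i00}=-\gamma_i-\alpha$ if $B_{i00}=1$ else $\gamma_0$; $u_{i10}=\gamma_i$ if $B_{i10}=1$ else $-\gamma_{n-1}-\alpha$; $u_{i01}=-\gamma_i$ if $B_{i01}=1$ else $\gamma_0+\alpha$; $u_{i11}=\gamma_i+\alpha$ if $B_{i11}=1$ else $-\gamma_{n-1}$. *)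

theory Defs
  imports Complex_Main
begin

text \<open>A joint law of (Y0, Y1, D, Z) where Y0 = gamma a, Y1 = gamma b, indices a b < n,
  D = d < 2, Z = z < 2, is represented by its probability mass function q a b d z.
  Exclusion is built in: the potential outcomes Y(d,z) do not depend on z.\<close>

definition PZ :: "nat \<Rightarrow> (nat \<Rightarrow> nat \<Rightarrow> nat \<Rightarrow> nat \<Rightarrow> real) \<Rightarrow> nat \<Rightarrow> real" where
  "PZ n q z = (\<Sum>a<n. \<Sum>b<n. \<Sum>d<2. q a b d z)"

definition PY01 :: "nat \<Rightarrow> (nat \<Rightarrow> nat \<Rightarrow> nat \<Rightarrow> nat \<Rightarrow> real) \<Rightarrow> nat \<Rightarrow> nat \<Rightarrow> real" where
  "PY01 n q a b = (\<Sum>d<2. \<Sum>z<2. q a b d z)"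

definition valid_law :: "nat \<Rightarrow> (nat \<Rightarrow> nat \<Rightarrow> nat \<Rightarrow> nat \<Rightarrow> real) \<Rightarrow> bool" where
  "valid_law n q \<longleftrightarrow>
     (\<forall>a b d z. 0 \<le> q a b d z) \<and>
     (\<forall>a b d z. (n \<le> a \<or> n \<le> b \<or> 2 \<le> d \<or> 2 \<le> z) \<longrightarrow> q a b d z = 0) \<and>
     (\<Sum>a<n. \<Sum>b<n. \<Sum>d<2. \<Sum>z<2. q a b d z) = 1 \<and>
     (\<forall>z<2. 0 < PZ n q z) \<and>
     (\<forall>a<n. \<forall>b<n. \<forall>z<2. (\<Sum>d<2. q a b d z) = PY01 n q a b * PZ n q z)"

text \<open>Observed joint law of (Y, D, Z), with Y = (1-D) Y0 + D Y1 (outcome consistency).\<close>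
definition obs :: "nat \<Rightarrow> (nat \<Rightarrow> nat \<Rightarrow> nat \<Rightarrow> nat \<Rightarrow> real) \<Rightarrow> nat \<Rightarrow> nat \<Rightarrow> nat \<Rightarrow> real" where
  "obs n q y d z = (\<Sum>a<n. \<Sum>b<n. if (if d = 0 then a else b) = y then q a b d z else 0)"

definition pvec :: "nat \<Rightarrow> (nat \<Rightarrow> nat \<Rightarrow> nat \<Rightarrow> nat \<Rightarrow> real) \<Rightarrow> nat \<Rightarrow> nat \<Rightarrow> nat \<Rightarrow> real" where
  "pvec n q y d z = obs n q y d z / PZ n q z"

definition pbar :: "nat \<Rightarrow> (nat \<Rightarrow> nat \<Rightarrow> nat \<Rightarrow> nat \<Rightarrow> real) \<Rightarrow> nat \<Rightarrow> nat \<Rightarrow> nat \<Rightarrow> real" where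
  "pbar n q y d z = pvec n q y (1 - d) z"

definition dotv :: "nat \<Rightarrow> (nat \<Rightarrow> nat \<Rightarrow> nat \<Rightarrow> real) \<Rightarrow> (nat \<Rightarrow> nat \<Rightarrow> nat \<Rightarrow> real) \<Rightarrow> real" where
  "dotv n v p = (\<Sum>y<n. \<Sum>d<2. \<Sum>z<2. v y d z * p y d z)"

definition ATE :: "(nat \<Rightarrow> real) \<Rightarrow> nat \<Rightarrow> (nat \<Rightarrow> nat \<Rightarrow> nat \<Rightarrow> nat \<Rightarrow> real) \<Rightarrow> real" where
  "ATE \<gamma> n q = (\<Sum>a<n. \<Sum>b<n. \<Sum>d<2. \<Sum>z<2. q a b d z * (\<gamma> b - \<gamma> a))"

definition uvec :: "(nat \<Rightarrow> real) \<Rightarrow> nat \<Rightarrow> real \<Rightarrow> (nat \<Rightarrow> nat \<Rightarrow> nat \<Rightarrow> bool) \<Rightarrow> nat \<Rightarrow> nat \<Rightarrow> nat \<Rightarrow> real" where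
  "uvec \<gamma> n \<alpha> B i d z =
     (if i < n then
        (if d = 0 \<and> z = 0 then (if B i 0 0 then - \<gamma> i - \<alpha> else \<gamma> 0)
         else if d = 1 \<and> z = 0 then (if B i 1 0 then \<gamma> i else - \<gamma> (n - 1) - \<alpha>)
         else if d = 0 \<and> z = 1 then (if B i 0 1 then - \<gamma> i else \<gamma> 0 + \<alpha>)
         else if d = 1 \<and> z = 1 then (if B i 1 1 then \<gamma> i + \<alpha> else - \<gamma> (n - 1))
         else 0)
      else 0)"

definition S1 :: "nat \<Rightarrow> nat \<Rightarrow> (nat \<Rightarrow> nat \<Rightarrow> nat \<Rightarrow> bool) \<Rightarrow> bool" where
  "S1 n t B \<longleftrightarrow> t + 2 \<le> n \<and>
     (\<forall>i. t \<le> i \<and> i < n \<longrightarrow> B i 0 0 \<and> B i 0 1) \<and>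
     (\<forall>i<t. B i 0 0 \<noteq> B i 0 1) \<and>
     (\<forall>i<n. B i 1 0 \<noteq> B i 1 1) \<and>
     (\<exists>i<n. \<exists>j<n. B i 1 0 \<and> B j 1 1)"

definition S2 :: "nat \<Rightarrow> (nat \<Rightarrow> nat \<Rightarrow> nat \<Rightarrow> bool) \<Rightarrow> bool" where
  "S2 n B \<longleftrightarrow> B (n - 1) 0 0 \<and> B (n - 1) 0 1 \<and> B 0 1 0 \<and> B 0 1 1 \<and>
     (\<forall>i. i + 1 < n \<longrightarrow> B i 0 0 \<noteq> B i 0 1) \<and>
     (\<forall>j. 0 < j \<and> j < n \<longrightarrow> B j 1 0 \<noteq> B j 1 1)"

definition S3 :: "nat \<Rightarrow> nat \<Rightarrow> (nat \<Rightarrow> nat \<Rightarrow> nat \<Rightarrow> bool) \<Rightarrow> bool" where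
  "S3 n t B \<longleftrightarrow> 1 \<le> t \<and> t + 1 \<le> n \<and>
     (\<forall>i\<le>t. B i 1 0 \<and> B i 1 1) \<and>
     (\<forall>i. t < i \<and> i < n \<longrightarrow> B i 1 0 \<noteq> B i 1 1) \<and>
     (\<forall>i<n. B i 0 0 \<noteq> B i 0 1) \<and>
     (\<exists>i<n. \<exists>j<n. B i 0 0 \<and> B j 0 1)"

definition Vset :: "(nat \<Rightarrow> real) \<Rightarrow> nat \<Rightarrow> (nat \<Rightarrow> nat \<Rightarrow> nat \<Rightarrow> real) set" where
  "Vset \<gamma> n =
     {uvec \<gamma> n (- \<gamma> 0 - \<gamma> t) B | t B. S1 n t B} \<union>
     {uvec \<gamma> n (- \<gamma> 0 - \<gamma> (n - 1)) B | B. S2 n B} \<union>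
     {uvec \<gamma> n (- \<gamma> t - \<gamma> (n - 1)) B | t B. S3 n t B}"

definition lower_bd :: "(nat \<Rightarrow> real) \<Rightarrow> nat \<Rightarrow> (nat \<Rightarrow> nat \<Rightarrow> nat \<Rightarrow> nat \<Rightarrow> real) \<Rightarrow> real" where
  "lower_bd \<gamma> n q = Max ((\<lambda>v. dotv n v (pvec n q)) ` Vset \<gamma> n)"

definition upper_bd :: "(nat \<Rightarrow> real) \<Rightarrow> nat \<Rightarrow> (nat \<Rightarrow> nat \<Rightarrow> nat \<Rightarrow> nat \<Rightarrow> real) \<Rightarrow> real" where
  "upper_bd \<gamma> n q = - Max ((\<lambda>v. dotv n v (pbar n q)) ` Vset \<gamma> n)"

end

theory Submission
  imports Defs
begin

text \<open>
  Validity: a unit with potential outcomes (\<gamma> a, \<gamma> b) appears in p at (a, 0, z) or at (b, 1, z),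
  according to the treatment it takes under Z = z. The conditions defining S1, S2 and S3 give
  max (u a 0 z) (u b 1 z), summed over z, at most \<gamma> b - \<gamma> a; hence dotv n u p \<le> E[Y(1) - Y(0)]
  for every u \<in> V.

  Sharpness: give never-takers Y(1) = \<gamma> 0 and always-takers Y(0) = \<gamma> (n - 1), and couple the
  outcome marginals of compliers and of defiers independently. These laws reproduce p, and their
  treatment effect is an affine function of the never-taker and always-taker masses, to be minimised
  over a box under one balance equation. A greedy solution with threshold
  l \<in> {\<gamma> 0 + \<gamma> i} \<union> {\<gamma> (n - 1) + \<gamma> i} attains the Lagrangian value dual_bound l, and some
  u \<in> V has dotv n u p \<ge> dual_bound l; so the maximum over V is attained.

  The upper bound is the lower bound for the law in which D is replaced by 1 - D and Y(0), Y(1)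
  are exchanged.
\<close>

section \<open>Independent couplings\<close>

lemma independent_coupling_marginals:
  fixes u v :: "'a \<Rightarrow> real"
  assumes "finite A" and u: "\<And>i. i \<in> A \<Longrightarrow> 0 \<le> u i" and v: "\<And>i. i \<in> A \<Longrightarrow> 0 \<le> v i"
    and mass: "sum v A = sum u A"
  shows "a \<in> A \<Longrightarrow> (\<Sum>b\<in>A. u a * v b / sum u A) = u a"
    and "b \<in> A \<Longrightarrow> (\<Sum>a\<in>A. u a * v b / sum u A) = v b"
proof -
  have zero: "sum u A = 0 \<Longrightarrow> i \<in> A \<Longrightarrow> u i = 0 \<and> v i = 0" for i
    using sum_nonneg_eq_0_iff[of A u] sum_nonneg_eq_0_iff[of A v] assms by auto
  show "a \<in> A \<Longrightarrow> (\<Sum>b\<in>A. u a * v b / sum u A) = u a"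
    using zero[of a] mass
    by (cases "sum u A = 0") (simp_all add: sum_divide_distrib[symmetric] sum_distrib_left[symmetric])
  show "b \<in> A \<Longrightarrow> (\<Sum>a\<in>A. u a * v b / sum u A) = v b"
    using zero[of b]
    by (cases "sum u A = 0") (simp_all add: sum_divide_distrib[symmetric] sum_distrib_right[symmetric])
qed

lemma independent_coupling_mean_difference:
  fixes u v g :: "'a \<Rightarrow> real"
  assumes "finite A" "\<And>i. i \<in> A \<Longrightarrow> 0 \<le> u i" "\<And>i. i \<in> A \<Longrightarrow> 0 \<le> v i"
    and "sum v A = sum u A"
  shows "(\<Sum>a\<in>A. \<Sum>b\<in>A. u a * v b / sum u A * (g b - g a)) = (\<Sum>b\<in>A. g b * v b) - (\<Sum>a\<in>A. g a * u a)"
proof -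
  note marg = independent_coupling_marginals[OF assms]
  have "(\<Sum>a\<in>A. \<Sum>b\<in>A. u a * v b / sum u A * (g b - g a)) =
        (\<Sum>a\<in>A. \<Sum>b\<in>A. g b * (u a * v b / sum u A)) - (\<Sum>a\<in>A. g a * (\<Sum>b\<in>A. u a * v b / sum u A))"
    by (simp add: sum_subtractf[symmetric] sum_distrib_left diff_divide_distrib algebra_simps)
  also have "(\<Sum>a\<in>A. \<Sum>b\<in>A. g b * (u a * v b / sum u A)) = (\<Sum>b\<in>A. g b * (\<Sum>a\<in>A. u a * v b / sum u A))"
    by (subst sum.swap) (simp add: sum_distrib_left)
  finally show ?thesis
    by (simp add: marg cong: sum.cong)
qed

section \<open>Thresholds of a linear program on a line\<close>

text \<open>h l = D - sum m {i\<in>I. c i \<le> l} + sum k {i\<in>I. l < d i} is nonincreasing and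
  right-continuous, with jumps only in c ` I \<union> d ` I; the last conclusion is its left limit at l,
  so l is where h changes sign.\<close>

lemma threshold_crossing:
  fixes c d m k :: "'i \<Rightarrow> real"
  assumes fin: "finite I" and ne: "I \<noteq> {}"
    and upper: "D \<le> sum m I" and lower: "- sum k I \<le> D"
  obtains l where "l \<in> c ` I \<union> d ` I"
    and "D - sum m {i\<in>I. c i \<le> l} + sum k {i\<in>I. l < d i} \<le> 0"
    and "0 \<le> D - sum m {i\<in>I. c i < l} + sum k {i\<in>I. l \<le> d i}"
proof -
  define L where "L = c ` I \<union> d ` I"
  define h where "h l = D - sum m {i\<in>I. c i \<le> l} + sum k {i\<in>I. l < d i}" for l
  have finL: "finite L" and cd_L: "\<And>i. i \<in> I \<Longrightarrow> c i \<in> L \<and> d i \<in> L"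
    unfolding L_def using fin by auto
  define Lneg where "Lneg = {l\<in>L. h l \<le> 0}"
  have "Max L \<in> Lneg"
  proof -
    have all: "{i\<in>I. c i \<le> Max L} = I" and none: "{i\<in>I. Max L < d i} = {}"
      using finL cd_L by (auto simp: not_less)
    have "h (Max L) \<le> 0" unfolding h_def all none using upper by simp
    then show ?thesis
      unfolding Lneg_def using Max_in[OF finL] ne by (auto simp: L_def)
  qed
  moreover have "finite Lneg" unfolding Lneg_def using finL by simp
  moreover define ls where "ls = Min Lneg"
  ultimately have ls: "ls \<in> L" "h ls \<le> 0" and ls_min: "\<And>l. l \<in> Lneg \<Longrightarrow> ls \<le> l"
    using Min_in[of Lneg] by (auto simp: Lneg_def)
  have "0 \<le> D - sum m {i\<in>I. c i < ls} + sum k {i\<in>I. ls \<le> d i}"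
  proof (cases "\<exists>l\<in>L. l < ls")
    case False
    then have none: "{i\<in>I. c i < ls} = {}" and all: "{i\<in>I. ls \<le> d i} = I"
      using cd_L by (auto simp: not_less)
    show ?thesis unfolding none all using lower by simp
  next
    case True
    define lp where "lp = Max {l\<in>L. l < ls}"
    have "lp \<in> {l\<in>L. l < ls}" unfolding lp_def using True finL by (intro Max_in) auto
    then have lp: "lp \<in> L" "lp < ls" by auto
    have lp_max: "\<And>l. l \<in> L \<Longrightarrow> l < ls \<Longrightarrow> l \<le> lp"
      unfolding lp_def using finL by simp
    have "{i\<in>I. c i \<le> lp} = {i\<in>I. c i < ls}" "{i\<in>I. lp < d i} = {i\<in>I. ls \<le> d i}"
      using lp lp_max cd_L by (auto simp: not_less intro: le_less_trans less_le_trans) fastforce+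
    moreover have "0 < h lp" using ls_min[of lp] lp unfolding Lneg_def by force
    ultimately show ?thesis unfolding h_def by simp
  qed
  then show thesis using that ls unfolding h_def L_def by blast
qed

text \<open>The last two conclusions are complementary slackness at l: f i = m i if c i < l and f i = 0
  if l < c i, dually for e.\<close>

lemma threshold_split:
  fixes c d m k :: "'i \<Rightarrow> real"
  assumes fin: "finite I" and m: "\<And>i. i \<in> I \<Longrightarrow> 0 \<le> m i" and k: "\<And>i. i \<in> I \<Longrightarrow> 0 \<le> k i"
    and right: "D - sum m {i\<in>I. c i \<le> l} + sum k {i\<in>I. l < d i} \<le> 0"
    and left: "0 \<le> D - sum m {i\<in>I. c i < l} + sum k {i\<in>I. l \<le> d i}"
  obtains f e where "sum f I - sum e I = D"
    and "\<And>i. i \<in> I \<Longrightarrow> 0 \<le> f i \<and> f i \<le> m i" and "\<And>i. i \<in> I \<Longrightarrow> 0 \<le> e i \<and> e i \<le> k i"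
    and "\<And>i. i \<in> I \<Longrightarrow> c i * f i = l * f i - m i * max 0 (l - c i)"
    and "\<And>i. i \<in> I \<Longrightarrow> d i * e i = l * e i + k i * max 0 (d i - l)"
proof -
  define r where "r = D - sum m {i\<in>I. c i < l} + sum k {i\<in>I. l < d i}"
  define Mc where "Mc = sum m {i\<in>I. c i = l}"
  define Kd where "Kd = sum k {i\<in>I. d i = l}"
  have "sum m {i\<in>I. c i \<le> l} = sum m {i\<in>I. c i < l} + Mc"
    unfolding Mc_def using fin by (subst sum.union_disjoint[symmetric]) (auto intro: sum.cong)
  moreover have "sum k {i\<in>I. l \<le> d i} = sum k {i\<in>I. l < d i} + Kd"
    unfolding Kd_def using fin by (subst sum.union_disjoint[symmetric]) (auto intro: sum.cong)
  ultimately have r_le: "r \<le> Mc" and r_ge: "- Kd \<le> r"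
    using left right unfolding r_def by linarith+
  define \<theta> where "\<theta> = (if 0 < r then r / Mc else 0)"
  define \<phi> where "\<phi> = (if r < 0 then - r / Kd else 0)"
  have \<theta>: "0 \<le> \<theta>" "\<theta> \<le> 1" "\<theta> * Mc = max 0 r"
    using r_le unfolding \<theta>_def by auto
  have \<phi>: "0 \<le> \<phi>" "\<phi> \<le> 1" "\<phi> * Kd = max 0 (- r)"
    using r_ge unfolding \<phi>_def by (auto simp: divide_le_eq le_divide_eq)
  define f where "f i = (if c i < l then m i else 0) + \<theta> * (if c i = l then m i else 0)" for i
  define e where "e i = (if l < d i then k i else 0) + \<phi> * (if d i = l then k i else 0)" for i
  have "sum f I = sum m {i\<in>I. c i < l} + \<theta> * Mc"
    unfolding f_def Mc_def using fin by (simp add: sum.distrib sum_distrib_left sum.inter_filter)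
  moreover have "sum e I = sum k {i\<in>I. l < d i} + \<phi> * Kd"
    unfolding e_def Kd_def using fin by (simp add: sum.distrib sum_distrib_left sum.inter_filter)
  ultimately have "sum f I - sum e I = D"
    using \<theta>(3) \<phi>(3) unfolding r_def by (simp add: max_def)
  moreover have "0 \<le> f i \<and> f i \<le> m i" "0 \<le> e i \<and> e i \<le> k i" if "i \<in> I" for i
    using \<theta> \<phi> m[OF that] k[OF that] mult_left_le_one_le[of "m i" \<theta>] mult_left_le_one_le[of "k i" \<phi>]
    unfolding f_def e_def by auto
  moreover have "c i * f i = l * f i - m i * max 0 (l - c i)" "d i * e i = l * e i + k i * max 0 (d i - l)" for i
    unfolding f_def e_def by (auto simp: algebra_simps)
  ultimately show thesis using that by blast
qed

section \<open>Observed laws\<close>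

lemma sum_lessThan_2: "sum f {..<2::nat} = f 0 + f 1"
  by (simp add: numeral_2_eq_2)

lemma obs_untreated: "y < n \<Longrightarrow> obs n q y 0 z = (\<Sum>b<n. q y b 0 z)"
  unfolding obs_def by (simp add: sum.swap[of _ "{..<n}" "{..<n}"])

lemma obs_treated: "y < n \<Longrightarrow> obs n q y (Suc 0) z = (\<Sum>a<n. q a y (Suc 0) z)"
  unfolding obs_def by simp

lemma PZ_eq_sum_obs: "PZ n q z = (\<Sum>y<n. obs n q y 0 z + obs n q y 1 z)"
proof -
  have "(\<Sum>y<n. obs n q y 0 z + obs n q y 1 z) = (\<Sum>y<n. (\<Sum>b<n. q y b 0 z) + (\<Sum>a<n. q a y 1 z))"
    by (intro sum.cong refl) (simp add: obs_untreated obs_treated)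
  also have "\<dots> = PZ n q z"
    unfolding PZ_def sum.distrib by (subst (2) sum.swap) (simp add: sum_lessThan_2 sum.distrib)
  finally show ?thesis by simp
qed

lemma sum_law_eq_sum_PZ: "(\<Sum>a<n. \<Sum>b<n. \<Sum>d<2. \<Sum>z<2. q a b d z) = (\<Sum>z<2. PZ n q z)"
  unfolding PZ_def by (simp add: sum_lessThan_2 sum.distrib)

lemma pvec_eq_if_obs_eq:
  assumes "\<forall>y<n. \<forall>d<2. \<forall>z<2. obs n q' y d z = obs n q y d z" and "y < n" "d < 2" "z < 2"
  shows "pvec n q' y d z = pvec n q y d z"
proof -
  have "PZ n q' z = PZ n q z" unfolding PZ_eq_sum_obs using assms(1,4) by simp
  then show ?thesis unfolding pvec_def using assms by simp
qed

lemma dotv_cong: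
  "(\<And>y d z. y < n \<Longrightarrow> d < 2 \<Longrightarrow> z < 2 \<Longrightarrow> p y d z = p' y d z) \<Longrightarrow> dotv n v p = dotv n v p'"
  unfolding dotv_def by (intro sum.cong refl) auto

lemma lower_bd_eq_if_obs_eq:
  assumes "\<forall>y<n. \<forall>d<2. \<forall>z<2. obs n q' y d z = obs n q y d z"
  shows "lower_bd \<gamma> n q' = lower_bd \<gamma> n q"
proof -
  have "dotv n v (pvec n q') = dotv n v (pvec n q)" for v
    by (rule dotv_cong) (rule pvec_eq_if_obs_eq[OF assms])
  then show ?thesis unfolding lower_bd_def by simp
qed

definition swap_treatment :: "(nat \<Rightarrow> nat \<Rightarrow> nat \<Rightarrow> nat \<Rightarrow> real) \<Rightarrow> nat \<Rightarrow> nat \<Rightarrow> nat \<Rightarrow> nat \<Rightarrow> real" where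
  "swap_treatment q a b d z = (if d < 2 then q b a (1 - d) z else 0)"

lemma sum_swap_treatment: "(\<Sum>d<2. swap_treatment q a b d z) = (\<Sum>d<2. q b a d z)"
  by (simp add: sum_lessThan_2 swap_treatment_def)

lemma PZ_swap_treatment: "PZ n (swap_treatment q) z = PZ n q z"
  unfolding PZ_def sum_swap_treatment by (rule sum.swap)

lemma PY01_swap_treatment: "PY01 n (swap_treatment q) a b = PY01 n q b a"
  unfolding PY01_def by (subst (1 2) sum.swap) (simp only: sum_swap_treatment)

lemma valid_law_swap_treatment:
  assumes "valid_law n q" shows "valid_law n (swap_treatment q)"
proof -
  have "(\<Sum>d<2. swap_treatment q a b d z) = PY01 n (swap_treatment q) a b * PZ n (swap_treatment q) z"
    if "a < n" "b < n" "z < 2" for a b z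
    using assms that unfolding valid_law_def sum_swap_treatment PY01_swap_treatment PZ_swap_treatment
    by simp
  moreover have "(\<Sum>a<n. \<Sum>b<n. \<Sum>d<2. \<Sum>z<2. swap_treatment q a b d z) = 1"
    using assms unfolding sum_law_eq_sum_PZ PZ_swap_treatment valid_law_def by simp
  ultimately show ?thesis
    using assms unfolding valid_law_def PZ_swap_treatment by (auto simp: swap_treatment_def)
qed

lemma obs_swap_treatment:
  assumes "y < n" "d < 2" shows "obs n (swap_treatment q) y d z = obs n q y (1 - d) z"
  using assms by (cases d) (simp_all add: obs_untreated obs_treated swap_treatment_def)

lemma ATE_swap_treatment: "ATE \<gamma> n (swap_treatment q) = - ATE \<gamma> n q"
proof -
  have "ATE \<gamma> n (swap_treatment q) = (\<Sum>a<n. \<Sum>b<n. (\<Sum>d<2. \<Sum>z<2. q b a d z) * (\<gamma> b - \<gamma> a))"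
    unfolding ATE_def by (simp add: sum_lessThan_2 swap_treatment_def algebra_simps)
  also have "\<dots> = - (\<Sum>b<n. \<Sum>a<n. (\<Sum>d<2. \<Sum>z<2. q b a d z) * (\<gamma> a - \<gamma> b))"
    by (subst sum.swap) (simp add: sum_negf[symmetric] algebra_simps)
  also have "\<dots> = - ATE \<gamma> n q"
    unfolding ATE_def by (simp add: sum_distrib_right)
  finally show ?thesis .
qed

lemma lower_bd_swap_treatment: "lower_bd \<gamma> n (swap_treatment q) = - upper_bd \<gamma> n q"
proof -
  have "dotv n v (pvec n (swap_treatment q)) = dotv n v (pbar n q)" for v
    by (rule dotv_cong) (simp add: pvec_def pbar_def obs_swap_treatment PZ_swap_treatment)
  then show ?thesis unfolding lower_bd_def upper_bd_def by simp
qed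

section \<open>Validity of the lower bound\<close>

lemma mult_add_mult_le_max:
  fixes x y s w :: real
  assumes "0 \<le> s" "0 \<le> w"
  shows "x * s + y * w \<le> max x y * (s + w)"
  using assms by (simp add: distrib_left add_mono mult_right_mono)

locale iv_law =
  fixes \<gamma> :: "nat \<Rightarrow> real" and n :: nat and q :: "nat \<Rightarrow> nat \<Rightarrow> nat \<Rightarrow> nat \<Rightarrow> real"
  assumes gamma_mono: "\<And>i j. i \<le> j \<Longrightarrow> j < n \<Longrightarrow> \<gamma> i \<le> \<gamma> j"
    and law: "valid_law n q"
begin

abbreviation p :: "nat \<Rightarrow> nat \<Rightarrow> nat \<Rightarrow> real" where "p \<equiv> pvec n q"

lemma gamma_0_le: "i < n \<Longrightarrow> \<gamma> 0 \<le> \<gamma> i"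
  using gamma_mono by simp

lemma gamma_le_last: "i < n \<Longrightarrow> \<gamma> i \<le> \<gamma> (n - 1)"
  using gamma_mono by simp

lemma q_nonneg: "0 \<le> q a b d z"
  using law unfolding valid_law_def by blast

lemma PZ_pos: "z < 2 \<Longrightarrow> 0 < PZ n q z"
  using law unfolding valid_law_def by blast

lemma PZ_0_plus_PZ_1: "PZ n q 0 + PZ n q 1 = 1"
  using law sum_law_eq_sum_PZ[where q = q] unfolding valid_law_def by (simp add: sum_lessThan_2)

lemma n_pos: "0 < n"
  using law unfolding valid_law_def by (cases n) auto

lemma PY01_nonneg: "0 \<le> PY01 n q a b"
  unfolding PY01_def by (intro sum_nonneg) (simp add: q_nonneg)

lemma sum_treatment_eq_PY01: "a < n \<Longrightarrow> b < n \<Longrightarrow> z < 2 \<Longrightarrow> q a b 0 z + q a b 1 z = PY01 n q a b * PZ n q z"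
  using law unfolding valid_law_def by (simp add: sum_lessThan_2)

definition qcond :: "nat \<Rightarrow> nat \<Rightarrow> nat \<Rightarrow> nat \<Rightarrow> real" where
  "qcond a b d z = q a b d z / PZ n q z"

lemma qcond_nonneg: "0 \<le> qcond a b d z"
  unfolding qcond_def PZ_def by (simp add: q_nonneg sum_nonneg)

lemma qcond_untreated_plus_treated:
  "a < n \<Longrightarrow> b < n \<Longrightarrow> z < 2 \<Longrightarrow> qcond a b 0 z + qcond a b 1 z = PY01 n q a b"
  using sum_treatment_eq_PY01[of a b z] PZ_pos[of z] unfolding qcond_def
  by (simp add: add_divide_distrib[symmetric])

lemma p_untreated: "y < n \<Longrightarrow> p y 0 z = (\<Sum>b<n. qcond y b 0 z)"
  unfolding pvec_def qcond_def by (simp add: obs_untreated sum_divide_distrib)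

lemma p_treated: "y < n \<Longrightarrow> p y (Suc 0) z = (\<Sum>a<n. qcond a y (Suc 0) z)"
  unfolding pvec_def qcond_def by (simp add: obs_treated sum_divide_distrib)

lemma p_nonneg: "0 \<le> p y d z"
  unfolding pvec_def obs_def PZ_def by (intro divide_nonneg_nonneg sum_nonneg) (auto simp: q_nonneg)

lemma sum_p: "z < 2 \<Longrightarrow> (\<Sum>y<n. p y 0 z + p y 1 z) = 1"
  using PZ_pos[of z] unfolding pvec_def add_divide_distrib[symmetric] sum_divide_distrib[symmetric]
    PZ_eq_sum_obs[symmetric] by simp

lemma ATE_eq_sum_PY01: "ATE \<gamma> n q = (\<Sum>a<n. \<Sum>b<n. PY01 n q a b * (\<gamma> b - \<gamma> a))"
  unfolding ATE_def
proof (intro sum.cong refl)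
  fix a b assume "a \<in> {..<n}" "b \<in> {..<n}"
  then have "(\<Sum>d<2. \<Sum>z<2. q a b d z) = PY01 n q a b * (PZ n q 0 + PZ n q 1)"
    using sum_treatment_eq_PY01[of a b 0] sum_treatment_eq_PY01[of a b 1]
    by (simp add: sum_lessThan_2 algebra_simps)
  then show "(\<Sum>d<2. \<Sum>z<2. q a b d z * (\<gamma> b - \<gamma> a)) = PY01 n q a b * (\<gamma> b - \<gamma> a)"
    using PZ_0_plus_PZ_1 by (simp add: sum_distrib_right[symmetric])
qed

lemma dotv_eq_sum_qcond:
  "dotv n U p = (\<Sum>a<n. \<Sum>b<n. U a 0 0 * qcond a b 0 0 + U b 1 0 * qcond a b 1 0
                                + U a 0 1 * qcond a b 0 1 + U b 1 1 * qcond a b 1 1)"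
proof -
  have "dotv n U p = (\<Sum>a<n. \<Sum>b<n. U a 0 0 * qcond a b 0 0 + U a 0 1 * qcond a b 0 1)
      + (\<Sum>b<n. \<Sum>a<n. U b 1 0 * qcond a b 1 0 + U b 1 1 * qcond a b 1 1)"
    unfolding dotv_def
    by (simp add: sum_lessThan_2 p_untreated p_treated sum.distrib sum_distrib_left algebra_simps)
  then show ?thesis
    by (subst (asm) (2) sum.swap) (simp add: sum.distrib algebra_simps)
qed

lemma dotv_le_ATE_if_pairwise_le:
  assumes pair: "\<And>a b. a < n \<Longrightarrow> b < n \<Longrightarrow> max (U a 0 0) (U b 1 0) + max (U a 0 1) (U b 1 1) \<le> \<gamma> b - \<gamma> a"
  shows "dotv n U p \<le> ATE \<gamma> n q"
  unfolding dotv_eq_sum_qcond ATE_eq_sum_PY01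
proof (intro sum_mono)
  fix a b assume "a \<in> {..<n}" "b \<in> {..<n}"
  then have ab: "a < n" "b < n" by auto
  have "U a 0 0 * qcond a b 0 0 + U b 1 0 * qcond a b 1 0
      \<le> max (U a 0 0) (U b 1 0) * (qcond a b 0 0 + qcond a b 1 0)"
    and "U a 0 1 * qcond a b 0 1 + U b 1 1 * qcond a b 1 1
      \<le> max (U a 0 1) (U b 1 1) * (qcond a b 0 1 + qcond a b 1 1)"
    by (rule mult_add_mult_le_max qcond_nonneg)+
  then have "U a 0 0 * qcond a b 0 0 + U b 1 0 * qcond a b 1 0 + U a 0 1 * qcond a b 0 1 + U b 1 1 * qcond a b 1 1
      \<le> max (U a 0 0) (U b 1 0) * PY01 n q a b + max (U a 0 1) (U b 1 1) * PY01 n q a b"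
    using qcond_untreated_plus_treated[OF ab, of 0] qcond_untreated_plus_treated[OF ab, of 1] by simp
  also have "\<dots> \<le> PY01 n q a b * (\<gamma> b - \<gamma> a)"
    using mult_right_mono[OF pair[OF ab] PY01_nonneg[of a b]] by (simp add: algebra_simps)
  finally show "U a 0 0 * qcond a b 0 0 + U b 1 0 * qcond a b 1 0 + U a 0 1 * qcond a b 0 1 + U b 1 1 * qcond a b 1 1
      \<le> PY01 n q a b * (\<gamma> b - \<gamma> a)" .
qed

lemma dotv_uvec_le_ATE:
  assumes C1: "\<And>a. a < n \<Longrightarrow> B a 0 0 \<and> B a 0 1 \<Longrightarrow> l \<le> \<gamma> 0 + \<gamma> a"
    and C2: "\<And>a. a < n \<Longrightarrow> \<not> (B a 0 0 \<and> B a 0 1) \<Longrightarrow> \<gamma> 0 + \<gamma> a \<le> l"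
    and C3: "\<And>b. b < n \<Longrightarrow> B b 1 0 \<and> B b 1 1 \<Longrightarrow> \<gamma> (n - 1) + \<gamma> b \<le> l"
    and C4: "\<And>b. b < n \<Longrightarrow> \<not> (B b 1 0 \<and> B b 1 1) \<Longrightarrow> l \<le> \<gamma> (n - 1) + \<gamma> b"
  shows "dotv n (uvec \<gamma> n (- l) B) p \<le> ATE \<gamma> n q"
proof (rule dotv_le_ATE_if_pairwise_le)
  fix a b assume ab: "a < n" "b < n"
  have "\<gamma> 0 \<le> \<gamma> b" "\<gamma> a \<le> \<gamma> (n - 1)" using gamma_0_le gamma_le_last ab by auto
  then show "max (uvec \<gamma> n (- l) B a 0 0) (uvec \<gamma> n (- l) B b 1 0)
      + max (uvec \<gamma> n (- l) B a 0 1) (uvec \<gamma> n (- l) B b 1 1) \<le> \<gamma> b - \<gamma> a"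
    using C1[OF ab(1)] C2[OF ab(1)] C3[OF ab(2)] C4[OF ab(2)] ab
    unfolding uvec_def by (auto simp: max_def)
qed

lemma S1_dotv_le_ATE:
  assumes "S1 n t B" shows "dotv n (uvec \<gamma> n (- \<gamma> 0 - \<gamma> t) B) p \<le> ATE \<gamma> n q"
proof -
  from assms have t: "t + 2 \<le> n" and all: "\<And>i. t \<le> i \<Longrightarrow> i < n \<Longrightarrow> B i 0 0 \<and> B i 0 1"
    and below: "\<And>i. i < t \<Longrightarrow> B i 0 0 \<noteq> B i 0 1" and treated: "\<And>i. i < n \<Longrightarrow> B i 1 0 \<noteq> B i 1 1"
    unfolding S1_def by auto
  have "dotv n (uvec \<gamma> n (- (\<gamma> 0 + \<gamma> t)) B) p \<le> ATE \<gamma> n q"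
  proof (rule dotv_uvec_le_ATE)
    fix a assume "a < n"
    show "B a 0 0 \<and> B a 0 1 \<Longrightarrow> \<gamma> 0 + \<gamma> t \<le> \<gamma> 0 + \<gamma> a"
      using below[of a] gamma_mono[of t a] \<open>a < n\<close> by (cases "a < t") auto
    show "\<not> (B a 0 0 \<and> B a 0 1) \<Longrightarrow> \<gamma> 0 + \<gamma> a \<le> \<gamma> 0 + \<gamma> t"
      using all[of a] gamma_mono[of a t] \<open>a < n\<close> t by (cases "t \<le> a") auto
  next
    fix b assume "b < n"
    then show "B b 1 0 \<and> B b 1 1 \<Longrightarrow> \<gamma> (n - 1) + \<gamma> b \<le> \<gamma> 0 + \<gamma> t"
      using treated by blast
    show "\<not> (B b 1 0 \<and> B b 1 1) \<Longrightarrow> \<gamma> 0 + \<gamma> t \<le> \<gamma> (n - 1) + \<gamma> b"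
      using gamma_le_last[of t] gamma_0_le[of b] \<open>b < n\<close> t by simp
  qed
  then show ?thesis by simp
qed

lemma S2_dotv_le_ATE:
  assumes "S2 n B" shows "dotv n (uvec \<gamma> n (- \<gamma> 0 - \<gamma> (n - 1)) B) p \<le> ATE \<gamma> n q"
proof -
  from assms have untreated: "\<And>i. i + 1 < n \<Longrightarrow> B i 0 0 \<noteq> B i 0 1"
    and treated: "\<And>j. 0 < j \<Longrightarrow> j < n \<Longrightarrow> B j 1 0 \<noteq> B j 1 1"
    unfolding S2_def by auto
  have "dotv n (uvec \<gamma> n (- (\<gamma> 0 + \<gamma> (n - 1))) B) p \<le> ATE \<gamma> n q"
  proof (rule dotv_uvec_le_ATE)
    fix a assume "a < n"
    assume "B a 0 0 \<and> B a 0 1"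
    then have "a = n - 1" using untreated[of a] \<open>a < n\<close> by (cases "a + 1 < n") auto
    then show "\<gamma> 0 + \<gamma> (n - 1) \<le> \<gamma> 0 + \<gamma> a" by simp
  next
    fix a assume "a < n"
    show "\<not> (B a 0 0 \<and> B a 0 1) \<Longrightarrow> \<gamma> 0 + \<gamma> a \<le> \<gamma> 0 + \<gamma> (n - 1)"
      using gamma_le_last \<open>a < n\<close> by simp
  next
    fix b assume "b < n"
    show "B b 1 0 \<and> B b 1 1 \<Longrightarrow> \<gamma> (n - 1) + \<gamma> b \<le> \<gamma> 0 + \<gamma> (n - 1)"
      using treated[of b] \<open>b < n\<close> by (cases "0 < b") auto
    show "\<not> (B b 1 0 \<and> B b 1 1) \<Longrightarrow> \<gamma> 0 + \<gamma> (n - 1) \<le> \<gamma> (n - 1) + \<gamma> b"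
      using gamma_0_le \<open>b < n\<close> by simp
  qed
  then show ?thesis by simp
qed

lemma S3_dotv_le_ATE:
  assumes "S3 n t B" shows "dotv n (uvec \<gamma> n (- \<gamma> t - \<gamma> (n - 1)) B) p \<le> ATE \<gamma> n q"
proof -
  from assms have t: "1 \<le> t" "t + 1 \<le> n" and all: "\<And>i. i \<le> t \<Longrightarrow> B i 1 0 \<and> B i 1 1"
    and above: "\<And>i. t < i \<Longrightarrow> i < n \<Longrightarrow> B i 1 0 \<noteq> B i 1 1"
    and untreated: "\<And>i. i < n \<Longrightarrow> B i 0 0 \<noteq> B i 0 1"
    unfolding S3_def by auto
  have "dotv n (uvec \<gamma> n (- (\<gamma> t + \<gamma> (n - 1))) B) p \<le> ATE \<gamma> n q"
  proof (rule dotv_uvec_le_ATE)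
    fix a assume "a < n"
    then show "B a 0 0 \<and> B a 0 1 \<Longrightarrow> \<gamma> t + \<gamma> (n - 1) \<le> \<gamma> 0 + \<gamma> a"
      using untreated by blast
    show "\<not> (B a 0 0 \<and> B a 0 1) \<Longrightarrow> \<gamma> 0 + \<gamma> a \<le> \<gamma> t + \<gamma> (n - 1)"
      using gamma_0_le[of t] gamma_le_last[of a] \<open>a < n\<close> t by simp
  next
    fix b assume "b < n"
    show "B b 1 0 \<and> B b 1 1 \<Longrightarrow> \<gamma> (n - 1) + \<gamma> b \<le> \<gamma> t + \<gamma> (n - 1)"
      using above[of b] gamma_mono[of b t] \<open>b < n\<close> t by (cases "t < b") auto
    show "\<not> (B b 1 0 \<and> B b 1 1) \<Longrightarrow> \<gamma> t + \<gamma> (n - 1) \<le> \<gamma> (n - 1) + \<gamma> b"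
      using all[of b] gamma_mono[of t b] \<open>b < n\<close> by (cases "b \<le> t") auto
  qed
  then show ?thesis by (simp add: algebra_simps)
qed

lemma Vset_dotv_le_ATE: "v \<in> Vset \<gamma> n \<Longrightarrow> dotv n v p \<le> ATE \<gamma> n q"
  unfolding Vset_def using S1_dotv_le_ATE S2_dotv_le_ATE S3_dotv_le_ATE by blast

lemma finite_Vset: "finite (Vset \<gamma> n)"
proof -
  define cube where "cube = {..<n} \<times> {..<2::nat} \<times> {..<2::nat}"
  define from_set where "from_set S = (\<lambda>i d z. (i, d, z) \<in> S)" for S :: "(nat \<times> nat \<times> nat) set"
  define alphas where "alphas = (\<lambda>(s, t). - \<gamma> s - \<gamma> t) ` ({..<n} \<times> {..<n})"
  have uvec_in: "uvec \<gamma> n (- \<gamma> s - \<gamma> t) B \<in> (\<lambda>(\<alpha>, S). uvec \<gamma> n \<alpha> (from_set S)) ` (alphas \<times> Pow cube)"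
    if "s < n" "t < n" for s t B
  proof -
    define S where "S = {(i, d, z). B i d z \<and> (i, d, z) \<in> cube}"
    have "uvec \<gamma> n (- \<gamma> s - \<gamma> t) B = uvec \<gamma> n (- \<gamma> s - \<gamma> t) (from_set S)"
      unfolding S_def from_set_def cube_def by (intro ext) (simp add: uvec_def)
    moreover have "(- \<gamma> s - \<gamma> t, S) \<in> alphas \<times> Pow cube"
      unfolding alphas_def S_def using that by auto
    ultimately show ?thesis by force
  qed
  have "Vset \<gamma> n \<subseteq> (\<lambda>(\<alpha>, S). uvec \<gamma> n \<alpha> (from_set S)) ` (alphas \<times> Pow cube)"
    unfolding Vset_def S1_def S2_def S3_def using uvec_in n_pos by auto
  moreover have "finite (alphas \<times> Pow cube)"
    unfolding alphas_def cube_def by simp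
  ultimately show ?thesis by (rule finite_subset[OF _ finite_imageI])
qed

section \<open>Sharpness of the lower bound\<close>

text \<open>N stands for never-takers (D = 0 under both instruments), A for always-takers.
  mN i and mA i bound the mass of never-takers with Y(0) = \<gamma> i and of always-takers with
  Y(1) = \<gamma> i; cN i and cA i are the coefficients of these masses in the treatment effect of the
  extremal laws built in locale taker_split.\<close>

definition cN :: "nat \<Rightarrow> real" where "cN i = \<gamma> 0 + \<gamma> i"
definition cA :: "nat \<Rightarrow> real" where "cA i = \<gamma> (n - 1) + \<gamma> i"
definition mN :: "nat \<Rightarrow> real" where "mN i = min (p i 0 0) (p i 0 1)"
definition mA :: "nat \<Rightarrow> real" where "mA i = min (p i 1 0) (p i 1 1)"

definition thresholds :: "real set" where "thresholds = cN ` {..<n} \<union> cA ` {..<n}"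

text \<open>The Lagrangian of the minimisation of that treatment effect over the never-taker and
  always-taker masses, with multiplier l for the balance equation.\<close>

definition dual_bound :: "real \<Rightarrow> real" where
  "dual_bound l = (\<Sum>i<n. \<gamma> i * (p i 1 0 + p i 1 1 - p i 0 0 - p i 0 1) + l * (p i 0 0 - p i 1 1)
                         - mN i * max 0 (l - cN i) - mA i * max 0 (cA i - l))"

lemma cN_le_cA: "i < n \<Longrightarrow> j < n \<Longrightarrow> cN i \<le> cA j"
  using gamma_0_le[of j] gamma_le_last[of i] unfolding cN_def cA_def by simp

lemma mN_nonneg: "0 \<le> mN i"
  unfolding mN_def by (simp add: p_nonneg)

lemma mA_nonneg: "0 \<le> mA i"
  unfolding mA_def by (simp add: p_nonneg)

text \<open>The choices of B at index i for which the i-th summand of dotv n (uvec \<gamma> n (- l) B) p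
  attains the i-th summand of dual_bound l, its maximum over all B.\<close>

definition untreated_optimal :: "real \<Rightarrow> (nat \<Rightarrow> nat \<Rightarrow> nat \<Rightarrow> bool) \<Rightarrow> nat \<Rightarrow> bool" where
  "untreated_optimal l B i \<longleftrightarrow>
     (B i 0 0 \<and> B i 0 1 \<and> l \<le> cN i) \<or>
     (B i 0 0 \<and> \<not> B i 0 1 \<and> p i 0 1 \<le> p i 0 0 \<and> cN i \<le> l) \<or>
     (\<not> B i 0 0 \<and> B i 0 1 \<and> p i 0 0 \<le> p i 0 1 \<and> cN i \<le> l)"

definition treated_optimal :: "real \<Rightarrow> (nat \<Rightarrow> nat \<Rightarrow> nat \<Rightarrow> bool) \<Rightarrow> nat \<Rightarrow> bool" where
  "treated_optimal l B i \<longleftrightarrow>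
     (B i 1 0 \<and> B i 1 1 \<and> cA i \<le> l) \<or>
     (B i 1 0 \<and> \<not> B i 1 1 \<and> p i 1 1 \<le> p i 1 0 \<and> l \<le> cA i) \<or>
     (\<not> B i 1 0 \<and> B i 1 1 \<and> p i 1 0 \<le> p i 1 1 \<and> l \<le> cA i)"

lemma dotv_uvec_eq_dual_bound:
  assumes "\<And>i. i < n \<Longrightarrow> untreated_optimal l B i" and "\<And>i. i < n \<Longrightarrow> treated_optimal l B i"
  shows "dotv n (uvec \<gamma> n (- l) B) p = dual_bound l"
  unfolding dotv_def dual_bound_def
proof (intro sum.cong refl)
  fix i assume "i \<in> {..<n}"
  then have i: "i < n" by simp
  have "uvec \<gamma> n (- l) B i 0 0 * p i 0 0 + uvec \<gamma> n (- l) B i 0 1 * p i 0 1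
      = - \<gamma> i * (p i 0 0 + p i 0 1) + l * p i 0 0 - mN i * max 0 (l - cN i)"
    using assms(1)[OF i] i unfolding untreated_optimal_def
    by (elim disjE) (auto simp: uvec_def mN_def cN_def min_def algebra_simps)
  moreover have "uvec \<gamma> n (- l) B i 1 0 * p i 1 0 + uvec \<gamma> n (- l) B i 1 1 * p i 1 1
      = \<gamma> i * (p i 1 0 + p i 1 1) - l * p i 1 1 - mA i * max 0 (cA i - l)"
    using assms(2)[OF i] i unfolding treated_optimal_def
    by (elim disjE) (auto simp: uvec_def mA_def cA_def min_def algebra_simps)
  ultimately show "(\<Sum>d<2. \<Sum>z<2. uvec \<gamma> n (- l) B i d z * p i d z) =
      \<gamma> i * (p i 1 0 + p i 1 1 - p i 0 0 - p i 0 1) + l * (p i 0 0 - p i 1 1)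
      - mN i * max 0 (l - cN i) - mA i * max 0 (cA i - l)"
    by (simp add: sum_lessThan_2 algebra_simps)
qed

definition optimal_choice :: "(nat \<Rightarrow> bool) \<Rightarrow> (nat \<Rightarrow> bool) \<Rightarrow> nat \<Rightarrow> nat \<Rightarrow> nat \<Rightarrow> bool" where
  "optimal_choice P Q i d z =
     (if d = 0 then P i \<or> (z = 0 \<longleftrightarrow> p i 0 1 \<le> p i 0 0) else Q i \<or> (z = 0 \<longleftrightarrow> p i 1 1 \<le> p i 1 0))"

lemma untreated_optimal_choice:
  "(P i \<Longrightarrow> l \<le> cN i) \<Longrightarrow> (\<not> P i \<Longrightarrow> cN i \<le> l) \<Longrightarrow> untreated_optimal l (optimal_choice P Q) i"
  unfolding untreated_optimal_def optimal_choice_def by auto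

lemma treated_optimal_choice:
  "(Q i \<Longrightarrow> cA i \<le> l) \<Longrightarrow> (\<not> Q i \<Longrightarrow> l \<le> cA i) \<Longrightarrow> treated_optimal l (optimal_choice P Q) i"
  unfolding treated_optimal_def optimal_choice_def by auto

lemma dual_bound_corner_in_Vset: "\<exists>v\<in>Vset \<gamma> n. dotv n v p = dual_bound (cN (n - 1))"
proof -
  define B where "B = optimal_choice (\<lambda>i. i = n - 1) (\<lambda>i. i = 0)"
  have "S2 n B" unfolding S2_def B_def optimal_choice_def by auto
  then have "uvec \<gamma> n (- cN (n - 1)) B \<in> Vset \<gamma> n" unfolding Vset_def cN_def by auto
  moreover have "dotv n (uvec \<gamma> n (- cN (n - 1)) B) p = dual_bound (cN (n - 1))"
    unfolding B_def using gamma_mono cN_le_cA[of "n - 1"] n_pos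
    by (intro dotv_uvec_eq_dual_bound untreated_optimal_choice treated_optimal_choice)
      (auto simp: cN_def cA_def)
  ultimately show ?thesis by blast
qed

lemma dual_bound_cN_in_Vset:
  assumes "t + 2 \<le> n" and "\<exists>i<n. p i 1 1 \<le> p i 1 0" and "\<exists>j<n. \<not> p j 1 1 \<le> p j 1 0"
  shows "\<exists>v\<in>Vset \<gamma> n. dotv n v p = dual_bound (cN t)"
proof -
  define B where "B = optimal_choice (\<lambda>i. t \<le> i) (\<lambda>_. False)"
  have "S1 n t B" using assms unfolding S1_def B_def optimal_choice_def by auto
  then have "uvec \<gamma> n (- cN t) B \<in> Vset \<gamma> n" unfolding Vset_def cN_def by auto
  moreover have "dotv n (uvec \<gamma> n (- cN t) B) p = dual_bound (cN t)"
    unfolding B_def using assms(1) gamma_mono cN_le_cA[of t]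
    by (intro dotv_uvec_eq_dual_bound untreated_optimal_choice treated_optimal_choice)
      (auto simp: cN_def)
  ultimately show ?thesis by blast
qed

lemma dual_bound_cA_in_Vset:
  assumes "1 \<le> t" "t + 1 \<le> n" and "\<exists>i<n. p i 0 1 \<le> p i 0 0" and "\<exists>j<n. \<not> p j 0 1 \<le> p j 0 0"
  shows "\<exists>v\<in>Vset \<gamma> n. dotv n v p = dual_bound (cA t)"
proof -
  define B where "B = optimal_choice (\<lambda>_. False) (\<lambda>i. i \<le> t)"
  have "S3 n t B" using assms unfolding S3_def B_def optimal_choice_def by auto
  then have "uvec \<gamma> n (- cA t) B \<in> Vset \<gamma> n" unfolding Vset_def cA_def by (auto simp: algebra_simps)
  moreover have "dotv n (uvec \<gamma> n (- cA t) B) p = dual_bound (cA t)"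
    unfolding B_def using assms(2) gamma_mono cN_le_cA[of _ t]
    by (intro dotv_uvec_eq_dual_bound untreated_optimal_choice treated_optimal_choice)
      (auto simp: cA_def)
  ultimately show ?thesis by blast
qed

lemma sum_p_untreated_treated: "(\<Sum>i<n. p i 0 0 + p i 1 0) = (\<Sum>i<n. p i 0 1 + p i 1 1)"
  using sum_p[of 0] sum_p[of 1] by simp

text \<open>When the comparison of p i 1 0 with p i 1 1 (resp. of p i 0 0 with p i 0 1) has the same
  outcome for every i, no B of the shape required by S1 (resp. S3) exists. Then dual_bound is
  monotone on the corresponding side of the corner cN (n - 1) = cA 0, where its slope is bounded
  by the following sum.\<close>

lemma corner_slope_nonneg:
  assumes "(\<forall>i<n. p i 1 1 \<le> p i 1 0) \<or> (\<forall>i<n. p i 1 0 < p i 1 1)"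
  shows "0 \<le> (\<Sum>i<n. p i 0 0 - p i 1 1 + mA i - mN i)"
  using assms
proof
  assume "\<forall>i<n. p i 1 1 \<le> p i 1 0"
  then have "(\<Sum>i<n. p i 0 0 - p i 1 1 + mA i - mN i) = (\<Sum>i<n. p i 0 0 - mN i)"
    by (intro sum.cong refl) (auto simp: mA_def)
  also have "\<dots> \<ge> 0" by (intro sum_nonneg) (simp add: mN_def)
  finally show ?thesis .
next
  assume "\<forall>i<n. p i 1 0 < p i 1 1"
  then have "(\<Sum>i<n. p i 0 0 - p i 1 1 + mA i - mN i)
      = (\<Sum>i<n. p i 0 0 + p i 1 0) - (\<Sum>i<n. p i 0 1 + p i 1 1) + (\<Sum>i<n. p i 0 1 - mN i)"
    unfolding sum_subtractf[symmetric] sum.distrib[symmetric]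
    by (intro sum.cong refl) (auto simp: mA_def)
  also have "\<dots> \<ge> 0"
    using sum_p_untreated_treated by (simp add: sum_nonneg mN_def)
  finally show ?thesis .
qed

lemma corner_slope_nonpos:
  assumes "(\<forall>i<n. p i 0 1 \<le> p i 0 0) \<or> (\<forall>i<n. p i 0 0 < p i 0 1)"
  shows "(\<Sum>i<n. p i 0 0 - p i 1 1 + mA i - mN i) \<le> 0"
  using assms
proof
  assume "\<forall>i<n. p i 0 1 \<le> p i 0 0"
  then have "(\<Sum>i<n. p i 0 0 - p i 1 1 + mA i - mN i)
      = (\<Sum>i<n. p i 0 0 + p i 1 0) - (\<Sum>i<n. p i 0 1 + p i 1 1) + (\<Sum>i<n. mA i - p i 1 0)"
    unfolding sum_subtractf[symmetric] sum.distrib[symmetric]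
    by (intro sum.cong refl) (auto simp: mN_def)
  also have "\<dots> \<le> 0"
    using sum_p_untreated_treated by (simp add: sum_nonpos mA_def)
  finally show ?thesis .
next
  assume "\<forall>i<n. p i 0 0 < p i 0 1"
  then have "(\<Sum>i<n. p i 0 0 - p i 1 1 + mA i - mN i) = (\<Sum>i<n. mA i - p i 1 1)"
    by (intro sum.cong refl) (auto simp: mN_def)
  also have "\<dots> \<le> 0" by (intro sum_nonpos) (simp add: mA_def)
  finally show ?thesis .
qed

lemma dual_bound_le_corner_from_below:
  assumes treated: "(\<forall>i<n. p i 1 1 \<le> p i 1 0) \<or> (\<forall>i<n. p i 1 0 < p i 1 1)"
    and l: "l \<le> cN (n - 1)"
  shows "dual_bound l \<le> dual_bound (cN (n - 1))"
proof -
  define u where "u = cN (n - 1)"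
  note slope = corner_slope_nonneg[OF treated]
  have "0 \<le> (u - l) * (\<Sum>i<n. p i 0 0 - p i 1 1 + mA i - mN i)"
    using slope l unfolding u_def by simp
  also have "\<dots> \<le> (\<Sum>i<n. (u - l) * (p i 0 0 - p i 1 1) - mN i * (max 0 (u - cN i) - max 0 (l - cN i))
                           + mA i * ((cA i - l) - (cA i - u)))"
    unfolding sum_distrib_left
  proof (intro sum_mono)
    fix i
    have "mN i * (max 0 (u - cN i) - max 0 (l - cN i)) \<le> mN i * (u - l)"
      using l mN_nonneg[of i] unfolding u_def by (intro mult_left_mono) auto
    then show "(u - l) * (p i 0 0 - p i 1 1 + mA i - mN i) \<le> (u - l) * (p i 0 0 - p i 1 1)
        - mN i * (max 0 (u - cN i) - max 0 (l - cN i)) + mA i * ((cA i - l) - (cA i - u))"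
      by (simp add: algebra_simps)
  qed
  also have "\<dots> = dual_bound u - dual_bound l"
  proof -
    have linear: "max 0 (cA i - l) = cA i - l" "max 0 (cA i - u) = cA i - u" if "i < n" for i
      using cN_le_cA[of "n - 1" i] that n_pos l unfolding u_def by auto
    show ?thesis
      unfolding dual_bound_def sum_subtractf[symmetric]
      by (intro sum.cong refl) (simp add: linear algebra_simps)
  qed
  finally show ?thesis unfolding u_def by simp
qed

lemma dual_bound_le_corner_from_above:
  assumes untreated: "(\<forall>i<n. p i 0 1 \<le> p i 0 0) \<or> (\<forall>i<n. p i 0 0 < p i 0 1)"
    and l: "cN (n - 1) \<le> l"
  shows "dual_bound l \<le> dual_bound (cN (n - 1))"
proof -
  define u where "u = cN (n - 1)"
  note slope = corner_slope_nonpos[OF untreated]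
  have "dual_bound l - dual_bound u = (\<Sum>i<n. (l - u) * (p i 0 0 - p i 1 1) - mN i * ((l - cN i) - (u - cN i))
                           + mA i * (max 0 (cA i - u) - max 0 (cA i - l)))"
  proof -
    have linear: "max 0 (l - cN i) = l - cN i" "max 0 (u - cN i) = u - cN i" if "i < n" for i
      using cN_le_cA[of i 0] that n_pos l unfolding u_def by (auto simp: cN_def cA_def)
    show ?thesis
      unfolding dual_bound_def sum_subtractf[symmetric]
      by (intro sum.cong refl) (simp add: linear algebra_simps)
  qed
  also have "\<dots> \<le> (l - u) * (\<Sum>i<n. p i 0 0 - p i 1 1 + mA i - mN i)"
    unfolding sum_distrib_left
  proof (intro sum_mono)
    fix i
    have "mA i * (max 0 (cA i - u) - max 0 (cA i - l)) \<le> mA i * (l - u)"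
      using l mA_nonneg[of i] unfolding u_def by (intro mult_left_mono) auto
    then show "(l - u) * (p i 0 0 - p i 1 1) - mN i * ((l - cN i) - (u - cN i))
        + mA i * (max 0 (cA i - u) - max 0 (cA i - l)) \<le> (l - u) * (p i 0 0 - p i 1 1 + mA i - mN i)"
      by (simp add: algebra_simps)
  qed
  also have "\<dots> \<le> 0"
    using slope l unfolding u_def by (simp add: mult_nonneg_nonpos)
  finally show ?thesis unfolding u_def by simp
qed

lemma dual_bound_le_Vset:
  assumes "l \<in> thresholds" shows "\<exists>v\<in>Vset \<gamma> n. dual_bound l \<le> dotv n v p"
proof -
  obtain v0 where v0: "v0 \<in> Vset \<gamma> n" "dotv n v0 p = dual_bound (cN (n - 1))"
    using dual_bound_corner_in_Vset by blast
  have corner: "dual_bound l \<le> dual_bound (cN (n - 1)) \<Longrightarrow> ?thesis"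
    using v0 by force
  from assms consider (N) t where "t < n" "l = cN t" | (A) t where "t < n" "l = cA t"
    unfolding thresholds_def by blast
  then show ?thesis
  proof cases
    case N
    show ?thesis
    proof (cases "t + 2 \<le> n \<and> (\<exists>i<n. p i 1 1 \<le> p i 1 0) \<and> (\<exists>j<n. \<not> p j 1 1 \<le> p j 1 0)")
      case True
      then show ?thesis using dual_bound_cN_in_Vset N(2) by force
    next
      case False
      then have "t = n - 1 \<or> (\<forall>i<n. p i 1 1 \<le> p i 1 0) \<or> (\<forall>i<n. p i 1 0 < p i 1 1)"
        using N(1) by force
      moreover have "l \<le> cN (n - 1)" using N gamma_le_last unfolding cN_def by simp
      ultimately show ?thesis using N(2) corner dual_bound_le_corner_from_below by blast
    qed
  next
    case A
    show ?thesis
    proof (cases "1 \<le> t \<and> (\<exists>i<n. p i 0 1 \<le> p i 0 0) \<and> (\<exists>j<n. \<not> p j 0 1 \<le> p j 0 0)")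
      case True
      then show ?thesis using dual_bound_cA_in_Vset A by force
    next
      case False
      then have "t = 0 \<or> (\<forall>i<n. p i 0 1 \<le> p i 0 0) \<or> (\<forall>i<n. p i 0 0 < p i 0 1)"
        by force
      moreover have "cN (n - 1) \<le> l" using A gamma_0_le unfolding cN_def cA_def by simp
      moreover have "t = 0 \<Longrightarrow> l = cN (n - 1)" using A unfolding cN_def cA_def by simp
      ultimately show ?thesis using corner dual_bound_le_corner_from_above by force
    qed
  qed
qed

lemma sum_untreated_minus_treated_le: "(\<Sum>i<n. p i 0 0) - (\<Sum>i<n. p i 1 1) \<le> (\<Sum>i<n. mN i)"
proof -
  have "(\<Sum>i<n. p i 0 0) - (\<Sum>i<n. p i 1 1) = (\<Sum>a<n. \<Sum>b<n. qcond a b 0 0) - (\<Sum>b<n. \<Sum>a<n. qcond a b 1 1)"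
    by (simp add: p_untreated p_treated)
  also have "\<dots> = (\<Sum>a<n. \<Sum>b<n. qcond a b 0 0 - qcond a b 1 1)"
    by (subst (2) sum.swap) (simp add: sum_subtractf)
  also have "\<dots> \<le> (\<Sum>a<n. \<Sum>b<n. min (qcond a b 0 0) (qcond a b 0 1))"
  proof (intro sum_mono)
    fix a b assume "a \<in> {..<n}" "b \<in> {..<n}"
    then show "qcond a b 0 0 - qcond a b 1 1 \<le> min (qcond a b 0 0) (qcond a b 0 1)"
      using qcond_untreated_plus_treated[of a b 0] qcond_untreated_plus_treated[of a b 1]
        qcond_nonneg[of a b 1 0] qcond_nonneg[of a b 1 1] by simp
  qed
  also have "\<dots> \<le> (\<Sum>a<n. mN a)"
    unfolding mN_def by (intro sum_mono) (simp add: p_untreated sum_mono)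
  finally show ?thesis .
qed

lemma sum_untreated_minus_treated_ge: "- (\<Sum>i<n. mA i) \<le> (\<Sum>i<n. p i 0 0) - (\<Sum>i<n. p i 1 1)"
proof -
  have "(\<Sum>i<n. p i 1 1) - (\<Sum>i<n. p i 0 0) = (\<Sum>b<n. \<Sum>a<n. qcond a b 1 1) - (\<Sum>a<n. \<Sum>b<n. qcond a b 0 0)"
    by (simp add: p_untreated p_treated)
  also have "\<dots> = (\<Sum>b<n. \<Sum>a<n. qcond a b 1 1 - qcond a b 0 0)"
    by (subst (2) sum.swap) (simp add: sum_subtractf)
  also have "\<dots> \<le> (\<Sum>b<n. \<Sum>a<n. min (qcond a b 1 0) (qcond a b 1 1))"
  proof (intro sum_mono)
    fix a b assume "b \<in> {..<n}" "a \<in> {..<n}"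
    then show "qcond a b 1 1 - qcond a b 0 0 \<le> min (qcond a b 1 0) (qcond a b 1 1)"
      using qcond_untreated_plus_treated[of a b 0] qcond_untreated_plus_treated[of a b 1]
        qcond_nonneg[of a b 0 0] qcond_nonneg[of a b 0 1] by simp
  qed
  also have "\<dots> \<le> (\<Sum>b<n. mA b)"
    unfolding mA_def by (intro sum_mono) (simp add: p_treated sum_mono)
  finally show ?thesis by simp
qed

end

text \<open>f i is the mass of never-takers with Y(0) = \<gamma> i, given Y(1) = \<gamma> 0, and e i that of
  always-takers with Y(1) = \<gamma> i, given Y(0) = \<gamma> (n - 1). The rest of p belongs to compliers, with
  outcome marginals p \<cdot> 0 0 - f and p \<cdot> 1 1 - e, and to defiers, with marginals p \<cdot> 0 1 - f and
  p \<cdot> 1 0 - e. The balance equation makes both pairs of marginals equal in total mass.\<close>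

locale taker_split = iv_law +
  fixes f e :: "nat \<Rightarrow> real"
  assumes f_nonneg: "\<And>i. i < n \<Longrightarrow> 0 \<le> f i" and f_le_mN: "\<And>i. i < n \<Longrightarrow> f i \<le> mN i"
    and e_nonneg: "\<And>i. i < n \<Longrightarrow> 0 \<le> e i" and e_le_mA: "\<And>i. i < n \<Longrightarrow> e i \<le> mA i"
    and balance: "(\<Sum>i<n. f i) - (\<Sum>i<n. e i) = (\<Sum>i<n. p i 0 0) - (\<Sum>i<n. p i 1 1)"
begin

definition complier :: "nat \<Rightarrow> nat \<Rightarrow> real" where
  "complier a b = (p a 0 0 - f a) * (p b 1 1 - e b) / (\<Sum>i<n. p i 0 0 - f i)"

definition defier :: "nat \<Rightarrow> nat \<Rightarrow> real" where
  "defier a b = (p a 0 1 - f a) * (p b 1 0 - e b) / (\<Sum>i<n. p i 0 1 - f i)"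

lemma complier_coupling_conditions:
  "finite {..<n}" "\<And>i. i \<in> {..<n} \<Longrightarrow> 0 \<le> p i 0 0 - f i" "\<And>i. i \<in> {..<n} \<Longrightarrow> 0 \<le> p i 1 1 - e i"
  "(\<Sum>i<n. p i 1 1 - e i) = (\<Sum>i<n. p i 0 0 - f i)"
  using f_le_mN e_le_mA balance by (auto simp: mN_def mA_def sum_subtractf)

lemma defier_coupling_conditions:
  "finite {..<n}" "\<And>i. i \<in> {..<n} \<Longrightarrow> 0 \<le> p i 0 1 - f i" "\<And>i. i \<in> {..<n} \<Longrightarrow> 0 \<le> p i 1 0 - e i"
  "(\<Sum>i<n. p i 1 0 - e i) = (\<Sum>i<n. p i 0 1 - f i)"
  using f_le_mN e_le_mA balance sum_p_untreated_treated by (auto simp: mN_def mA_def sum_subtractf sum.distrib)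

lemma complier_sum_row: "a < n \<Longrightarrow> (\<Sum>b<n. complier a b) = p a 0 0 - f a"
  using independent_coupling_marginals(1)[OF complier_coupling_conditions] by (simp add: complier_def)

lemma complier_sum_column: "b < n \<Longrightarrow> (\<Sum>a<n. complier a b) = p b 1 1 - e b"
  using independent_coupling_marginals(2)[OF complier_coupling_conditions] by (simp add: complier_def)

lemma defier_sum_row: "a < n \<Longrightarrow> (\<Sum>b<n. defier a b) = p a 0 1 - f a"
  using independent_coupling_marginals(1)[OF defier_coupling_conditions] by (simp add: defier_def)

lemma defier_sum_column: "b < n \<Longrightarrow> (\<Sum>a<n. defier a b) = p b 1 0 - e b"
  using independent_coupling_marginals(2)[OF defier_coupling_conditions] by (simp add: defier_def)

lemma complier_nonneg: "a < n \<Longrightarrow> b < n \<Longrightarrow> 0 \<le> complier a b"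
  unfolding complier_def using complier_coupling_conditions(2,3)
  by (intro divide_nonneg_nonneg mult_nonneg_nonneg sum_nonneg) auto

lemma defier_nonneg: "a < n \<Longrightarrow> b < n \<Longrightarrow> 0 \<le> defier a b"
  unfolding defier_def using defier_coupling_conditions(2,3)
  by (intro divide_nonneg_nonneg mult_nonneg_nonneg sum_nonneg) auto

lemma complier_mean_difference:
  "(\<Sum>a<n. \<Sum>b<n. complier a b * (\<gamma> b - \<gamma> a)) = (\<Sum>i<n. \<gamma> i * (p i 1 1 - e i)) - (\<Sum>i<n. \<gamma> i * (p i 0 0 - f i))"
  using independent_coupling_mean_difference[OF complier_coupling_conditions] by (simp add: complier_def)

lemma defier_mean_difference:
  "(\<Sum>a<n. \<Sum>b<n. defier a b * (\<gamma> b - \<gamma> a)) = (\<Sum>i<n. \<gamma> i * (p i 1 0 - e i)) - (\<Sum>i<n. \<gamma> i * (p i 0 1 - f i))"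
  using independent_coupling_mean_difference[OF defier_coupling_conditions] by (simp add: defier_def)

text \<open>The law of (Y(0), Y(1), D) given Z = z: under Z = 0 compliers are untreated and defiers treated,
  under Z = 1 the reverse.\<close>

definition split_cond :: "nat \<Rightarrow> nat \<Rightarrow> nat \<Rightarrow> nat \<Rightarrow> real" where
  "split_cond a b d z =
     (if d = 0 then (if b = 0 then f a else 0) + (if z = 0 then complier a b else defier a b)
      else (if a = n - 1 then e b else 0) + (if z = 0 then defier a b else complier a b))"

definition split_law :: "nat \<Rightarrow> nat \<Rightarrow> nat \<Rightarrow> nat \<Rightarrow> real" where
  "split_law a b d z = (if a < n \<and> b < n \<and> d < 2 \<and> z < 2 then PZ n q z * split_cond a b d z else 0)"

definition split_pair :: "nat \<Rightarrow> nat \<Rightarrow> real" where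
  "split_pair a b = (if b = 0 then f a else 0) + (if a = n - 1 then e b else 0) + complier a b + defier a b"

lemma split_cond_untreated_plus_treated: "split_cond a b 0 z + split_cond a b (Suc 0) z = split_pair a b"
  unfolding split_cond_def split_pair_def by auto

lemma split_cond_nonneg: "a < n \<Longrightarrow> b < n \<Longrightarrow> 0 \<le> split_cond a b d z"
  unfolding split_cond_def using f_nonneg e_nonneg complier_nonneg defier_nonneg by simp

lemma sum_split_cond_untreated: "a < n \<Longrightarrow> z < 2 \<Longrightarrow> (\<Sum>b<n. split_cond a b 0 z) = p a 0 z"
  unfolding split_cond_def using n_pos
  by (cases z) (auto simp: sum.distrib complier_sum_row complier_sum_column defier_sum_row defier_sum_column)

lemma sum_split_cond_treated: "b < n \<Longrightarrow> z < 2 \<Longrightarrow> (\<Sum>a<n. split_cond a b (Suc 0) z) = p b (Suc 0) z"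
  unfolding split_cond_def using n_pos
  by (cases z) (auto simp: sum.distrib complier_sum_row complier_sum_column defier_sum_row defier_sum_column)

lemma obs_split_law:
  assumes "y < n" "d < 2" "z < 2" shows "obs n split_law y d z = obs n q y d z"
proof -
  have "obs n q y d z = PZ n q z * p y d z"
    unfolding pvec_def using PZ_pos[OF assms(3)] by simp
  moreover have "obs n split_law y d z = PZ n q z * p y d z"
    using assms by (cases d)
      (simp_all add: obs_untreated obs_treated split_law_def sum_distrib_left[symmetric]
        sum_split_cond_untreated sum_split_cond_treated)
  ultimately show ?thesis by simp
qed

lemma sum_split_pair: "(\<Sum>a<n. \<Sum>b<n. split_pair a b) = 1"
proof -
  have "(\<Sum>a<n. \<Sum>b<n. split_pair a b) = (\<Sum>a<n. \<Sum>b<n. split_cond a b 0 0 + split_cond a b (Suc 0) 0)"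
    by (simp add: split_cond_untreated_plus_treated)
  also have "\<dots> = (\<Sum>a<n. \<Sum>b<n. split_cond a b 0 0) + (\<Sum>b<n. \<Sum>a<n. split_cond a b (Suc 0) 0)"
    unfolding sum.distrib by (subst (2) sum.swap) (rule refl)
  also have "\<dots> = (\<Sum>i<n. p i 0 0 + p i 1 0)"
    by (simp add: sum_split_cond_untreated sum_split_cond_treated sum.distrib)
  finally show ?thesis using sum_p[of 0] by simp
qed

lemma sum_treatment_split_law:
  "a < n \<Longrightarrow> b < n \<Longrightarrow> z < 2 \<Longrightarrow> (\<Sum>d<2. split_law a b d z) = PZ n q z * split_pair a b"
  unfolding split_law_def
  by (simp add: sum_lessThan_2 distrib_left[symmetric] split_cond_untreated_plus_treated)

lemma PZ_split_law: "z < 2 \<Longrightarrow> PZ n split_law z = PZ n q z"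
  unfolding PZ_def by (simp add: sum_treatment_split_law sum_distrib_left[symmetric] sum_split_pair
    flip: PZ_def)

lemma PY01_split_law:
  assumes "a < n" "b < n" shows "PY01 n split_law a b = split_pair a b"
proof -
  have "PY01 n split_law a b = (\<Sum>z<2. \<Sum>d<2. split_law a b d z)"
    unfolding PY01_def by (rule sum.swap)
  also have "\<dots> = (\<Sum>z<2. PZ n q z * split_pair a b)"
    using assms by (intro sum.cong refl) (simp add: sum_treatment_split_law)
  also have "\<dots> = split_pair a b"
    using PZ_0_plus_PZ_1 by (simp add: sum_lessThan_2 distrib_right[symmetric])
  finally show ?thesis .
qed

lemma valid_split_law: "valid_law n split_law"
  unfolding valid_law_def
proof (intro conjI allI impI)
  fix a b d z
  show "0 \<le> split_law a b d z"
    unfolding split_law_def using PZ_pos[of z] split_cond_nonneg[of a b d z] by auto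
  show "n \<le> a \<or> n \<le> b \<or> 2 \<le> d \<or> 2 \<le> z \<Longrightarrow> split_law a b d z = 0"
    unfolding split_law_def by auto
next
  show "(\<Sum>a<n. \<Sum>b<n. \<Sum>d<2. \<Sum>z<2. split_law a b d z) = 1"
    unfolding sum_law_eq_sum_PZ using PZ_0_plus_PZ_1 by (simp add: sum_lessThan_2 PZ_split_law)
next
  fix z :: nat assume "z < 2"
  then show "0 < PZ n split_law z" by (simp add: PZ_split_law PZ_pos)
next
  fix a b z :: nat assume "a < n" "b < n" "z < 2"
  then show "(\<Sum>d<2. split_law a b d z) = PY01 n split_law a b * PZ n split_law z"
    by (simp add: sum_treatment_split_law PY01_split_law PZ_split_law)
qed

lemma ATE_split_law:
  "ATE \<gamma> n split_law = (\<Sum>i<n. \<gamma> i * (p i 1 0 + p i 1 1 - p i 0 0 - p i 0 1) + cN i * f i - cA i * e i)"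
proof -
  interpret split: iv_law \<gamma> n split_law
    using gamma_mono valid_split_law by unfold_locales
  have "ATE \<gamma> n split_law = (\<Sum>a<n. \<Sum>b<n. split_pair a b * (\<gamma> b - \<gamma> a))"
    unfolding split.ATE_eq_sum_PY01 by (simp add: PY01_split_law)
  also have "\<dots> = (\<Sum>a<n. f a * (\<gamma> 0 - \<gamma> a)) + (\<Sum>b<n. e b * (\<gamma> b - \<gamma> (n - 1)))
      + (\<Sum>a<n. \<Sum>b<n. complier a b * (\<gamma> b - \<gamma> a)) + (\<Sum>a<n. \<Sum>b<n. defier a b * (\<gamma> b - \<gamma> a))"
    unfolding split_pair_def distrib_right sum.distrib using n_pos
    by (subst (2) sum.swap) (simp add: if_distrib[of "\<lambda>x. x * _"] cong: if_cong)
  also have "\<dots> = (\<Sum>i<n. \<gamma> i * (p i 1 0 + p i 1 1 - p i 0 0 - p i 0 1) + cN i * f i - cA i * e i)"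
    unfolding complier_mean_difference defier_mean_difference cN_def cA_def
    by (simp add: sum.distrib sum_subtractf algebra_simps)
  finally show ?thesis .
qed

end

context iv_law
begin

lemma exists_law_attaining_dual_bound:
  obtains l q' where "l \<in> thresholds" and "valid_law n q'"
    and "\<forall>y<n. \<forall>d<2. \<forall>z<2. obs n q' y d z = obs n q y d z" and "ATE \<gamma> n q' = dual_bound l"
proof -
  define D where "D = (\<Sum>i<n. p i 0 0) - (\<Sum>i<n. p i 1 1)"
  obtain l where l: "l \<in> thresholds"
    and right: "D - sum mN {i\<in>{..<n}. cN i \<le> l} + sum mA {i\<in>{..<n}. l < cA i} \<le> 0"
    and left: "0 \<le> D - sum mN {i\<in>{..<n}. cN i < l} + sum mA {i\<in>{..<n}. l \<le> cA i}"
    using threshold_crossing[of "{..<n}" D mN mA cN cA] n_pos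
      sum_untreated_minus_treated_le sum_untreated_minus_treated_ge
    unfolding D_def thresholds_def by auto
  obtain f e where balance: "sum f {..<n} - sum e {..<n} = D"
    and f: "\<And>i. i \<in> {..<n} \<Longrightarrow> 0 \<le> f i \<and> f i \<le> mN i"
    and e: "\<And>i. i \<in> {..<n} \<Longrightarrow> 0 \<le> e i \<and> e i \<le> mA i"
    and slack_f: "\<And>i. i \<in> {..<n} \<Longrightarrow> cN i * f i = l * f i - mN i * max 0 (l - cN i)"
    and slack_e: "\<And>i. i \<in> {..<n} \<Longrightarrow> cA i * e i = l * e i + mA i * max 0 (cA i - l)"
    using threshold_split[OF _ mN_nonneg mA_nonneg right left] by blast
  interpret taker_split \<gamma> n q f e
    using f e balance unfolding D_def by unfold_locales auto
  have "ATE \<gamma> n split_law = (\<Sum>i<n. \<gamma> i * (p i 1 0 + p i 1 1 - p i 0 0 - p i 0 1) + l * (f i - e i)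
      - mN i * max 0 (l - cN i) - mA i * max 0 (cA i - l))"
    unfolding ATE_split_law using slack_f slack_e by (intro sum.cong refl) (simp add: algebra_simps)
  also have "\<dots> = (\<Sum>i<n. \<gamma> i * (p i 1 0 + p i 1 1 - p i 0 0 - p i 0 1)
      - mN i * max 0 (l - cN i) - mA i * max 0 (cA i - l)) + l * (sum f {..<n} - sum e {..<n})"
    by (simp add: sum.distrib sum_subtractf sum_distrib_left algebra_simps)
  also have "\<dots> = dual_bound l"
    unfolding balance D_def dual_bound_def by (simp add: sum.distrib sum_subtractf sum_distrib_left algebra_simps)
  finally show thesis
    using that l valid_split_law obs_split_law by blast
qed

lemma lower_bd_le_ATE: "lower_bd \<gamma> n q \<le> ATE \<gamma> n q"
proof -
  have "Vset \<gamma> n \<noteq> {}" using dual_bound_corner_in_Vset by blast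
  then show ?thesis
    unfolding lower_bd_def using finite_Vset Vset_dotv_le_ATE by (simp add: Max_le_iff)
qed

lemma lower_bd_attained:
  "\<exists>q'. valid_law n q' \<and> (\<forall>y<n. \<forall>d<2. \<forall>z<2. obs n q' y d z = obs n q y d z) \<and> ATE \<gamma> n q' = lower_bd \<gamma> n q"
proof -
  obtain l q' where l: "l \<in> thresholds" and q': "valid_law n q'"
    and obs: "\<forall>y<n. \<forall>d<2. \<forall>z<2. obs n q' y d z = obs n q y d z" and ATE: "ATE \<gamma> n q' = dual_bound l"
    by (rule exists_law_attaining_dual_bound)
  interpret q': iv_law \<gamma> n q'
    using gamma_mono q' by unfold_locales
  obtain v where v: "v \<in> Vset \<gamma> n" "dual_bound l \<le> dotv n v p"
    using dual_bound_le_Vset[OF l] by blast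
  have "dotv n v p \<le> lower_bd \<gamma> n q"
    unfolding lower_bd_def using finite_Vset v(1) by (intro Max_ge) auto
  moreover have "lower_bd \<gamma> n q \<le> ATE \<gamma> n q'"
    using q'.lower_bd_le_ATE lower_bd_eq_if_obs_eq[OF obs] by simp
  ultimately have "ATE \<gamma> n q' = lower_bd \<gamma> n q"
    using ATE v(2) by linarith
  then show ?thesis using q' obs by blast
qed

section \<open>The upper bound\<close>

lemma ATE_le_upper_bd: "ATE \<gamma> n q \<le> upper_bd \<gamma> n q"
proof -
  interpret swapped: iv_law \<gamma> n "swap_treatment q"
    using gamma_mono valid_law_swap_treatment[OF law] by unfold_locales
  show ?thesis
    using swapped.lower_bd_le_ATE by (simp add: lower_bd_swap_treatment ATE_swap_treatment)
qed

lemma upper_bd_attained: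
  "\<exists>q'. valid_law n q' \<and> (\<forall>y<n. \<forall>d<2. \<forall>z<2. obs n q' y d z = obs n q y d z) \<and> ATE \<gamma> n q' = upper_bd \<gamma> n q"
proof -
  interpret swapped: iv_law \<gamma> n "swap_treatment q"
    using gamma_mono valid_law_swap_treatment[OF law] by unfold_locales
  obtain q' where q': "valid_law n q'"
    and obs: "\<forall>y<n. \<forall>d<2. \<forall>z<2. obs n q' y d z = obs n (swap_treatment q) y d z"
    and ATE: "ATE \<gamma> n q' = lower_bd \<gamma> n (swap_treatment q)"
    using swapped.lower_bd_attained by blast
  have "obs n (swap_treatment q') y d z = obs n q y d z" if "y < n" "d < 2" "z < 2" for y d z
    using obs that by (simp add: obs_swap_treatment)
  moreover have "ATE \<gamma> n (swap_treatment q') = upper_bd \<gamma> n q"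
    using ATE by (simp add: ATE_swap_treatment lower_bd_swap_treatment)
  ultimately show ?thesis
    using valid_law_swap_treatment[OF q'] by blast
qed

end

theorem theorem3:
  fixes \<gamma> :: "nat \<Rightarrow> real" and n :: nat
    and q :: "nat \<Rightarrow> nat \<Rightarrow> nat \<Rightarrow> nat \<Rightarrow> real"
  assumes mono: "\<And>i j. i < j \<Longrightarrow> j < n \<Longrightarrow> \<gamma> i < \<gamma> j"
    and law: "valid_law n q"
  shows "lower_bd \<gamma> n q \<le> ATE \<gamma> n q \<and> ATE \<gamma> n q \<le> upper_bd \<gamma> n q \<and>
         (\<exists>q'. valid_law n q' \<and> (\<forall>y<n. \<forall>d<2. \<forall>z<2. obs n q' y d z = obs n q y d z)
               \<and> ATE \<gamma> n q' = lower_bd \<gamma> n q) \<and>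
         (\<exists>q'. valid_law n q' \<and> (\<forall>y<n. \<forall>d<2. \<forall>z<2. obs n q' y d z = obs n q y d z)
               \<and> ATE \<gamma> n q' = upper_bd \<gamma> n q)"
proof -
  interpret iv_law \<gamma> n q
  proof
    show "\<gamma> i \<le> \<gamma> j" if "i \<le> j" "j < n" for i j
      using mono[of i j] that by (cases "i = j") auto
  qed (rule law)
  show ?thesis
    using lower_bd_le_ATE ATE_le_upper_bd lower_bd_attained upper_bd_attained by blast
qed

end
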